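(* If $[w,n] \in \mathbb{W}$ and $\alpha,\beta \vDash \ell(w)$ have $\mathrm{Peak}(w) = I(\alpha)$ and $\mathrm{Val}(w) = I(\beta)$ then $\Psi_{>|\leq}([w,n]) = K_\alpha$, $\Psi_{<|\geq}([w,n]) = K_\beta$, $\Psi_{\geq|<}([w^{\tt r},n]) = K_{\alpha^{\flat}}$, and $\Psi_{\leq|>}([w^{\tt r},n]) = K_{\beta^{\flat}}$.
   Context: Let $\Bbbk$ be a field (of characteristic not two, so that peak functions make sense as a basis). For a word $w=w_1\cdots w_m$ of positive integers with $\max(w)\le n$, $[w,n]$ is the linear endomorphism of the $\Bbbk$-span of all words sending a word $v$ of length $n$ to $v_{w_1}\cdots v_{w_m}$ and others to $0$; $\mathbb{W}$ is the set of these and $\textbf{W}$ their span, a graded bialgebra (degree $\ell(w)$) with product $[v,m]\otimes[w,n]\mapsto[v\sqcup\!\sqcup(w\uparrow m),m+n]$, coproduct $\Delta_\odot([w,n])=\sum_i[w_1\cdots w_i,n]\otimes[w_{i+1}\cdots w_m,n]$ and counit $1$ on $[\emptyset,n]$, $0$ otherwise. $\zeta_\le,\zeta_\ge,\zeta_<,\zeta_>:\textbf{W}\to\Bbbk$ send $[w,n]$ to $1$ if $w$ is weakly increasing, weakly decreasing, strictly increasing, strictly decreasing respectively, and $0$ otherwise. For $\bullet,\circ$ among these symbols, $\zeta_{\bullet|\circ}=\nabla_\Bbbk\circ(\zeta_\bullet\otimes\zeta_\circ)\circ\Delta_\odot$, and $\Psi_{\bullet|\circ}(x)=\sum_\gamma(\zeta_{\bullet|\circ})_\gamma(x)M_\gamma$,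 where for $\gamma=(\gamma_1,\dots,\gamma_k)$, $(\zeta)_\gamma$ is the iterated coproduct into $\textbf{W}^{\otimes k}$, projection onto degrees $\gamma_1,\dots,\gamma_k$, $\zeta^{\otimes k}$, and multiplication; this is the unique combinatorial bialgebra morphism $(\textbf{W},\zeta_{\bullet|\circ})\to(\textsf{QSym},\zeta_{\textsf{QSym}})$. For $\alpha=(\alpha_1,\dots,\alpha_l)\vDash n$, $I(\alpha)=\{\alpha_1,\dots,\alpha_1+\cdots+\alpha_{l-1}\}$; $\alpha$ is a peak composition if $\alpha_i\ge2$ for $i<l$, and then $K_\alpha=\sum_{\beta\vDash n,\ I(\alpha)\subseteq I(\beta)\cup(I(\beta)+1)}2^{\ell(\beta)}M_\beta$ and $\alpha^\flat=(\alpha_l+1,\alpha_{l-1},\dots,\alpha_2,\alpha_1-1)$. For a word $w$, $w^{\tt r}$ is its reversal, $\mathrm{Peak}(w)=\{i:1<i<\ell(w),\ w_{i-1}\le w_i>w_{i+1}\}$, $\mathrm{Val}(w)=\{i:1<i<\ell(w),\ w_{i-1}\ge w_i<w_{i+1}\}$. *)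

theory Defs
  imports Main
begin

text \<open>Words are lists of naturals; the element [w,n] of the basis of W is the pair (w,n)
  with all letters in {1..n}. An element of QSym is represented by its coordinate
  function with respect to the monomial basis: a map from compositions (nat lists)
  to coefficients (finitely supported).\<close>

definition in_W :: "nat list \<Rightarrow> nat \<Rightarrow> bool" where
  "in_W w n \<longleftrightarrow> set w \<subseteq> {1..n}"

definition is_comp :: "nat list \<Rightarrow> nat \<Rightarrow> bool" where
  "is_comp \<alpha> m \<longleftrightarrow> (\<forall>a\<in>set \<alpha>. 0 < a) \<and> sum_list \<alpha> = m"

definition Iset :: "nat list \<Rightarrow> nat set" where
  "Iset \<alpha> = {sum_list (take j \<alpha>) | j. 1 \<le> j \<and> j < length \<alpha>}"

text \<open>Peak and valley sets, 1-indexed positions as in the paper.\<close>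
definition Peak :: "nat list \<Rightarrow> nat set" where
  "Peak w = {i. 1 < i \<and> i < length w \<and> w ! (i-2) \<le> w ! (i-1) \<and> w ! (i-1) > w ! i}"

definition Val :: "nat list \<Rightarrow> nat set" where
  "Val w = {i. 1 < i \<and> i < length w \<and> w ! (i-2) \<ge> w ! (i-1) \<and> w ! (i-1) < w ! i}"

datatype zsym = ZLe | ZGe | ZLt | ZGt

fun zrel :: "zsym \<Rightarrow> nat \<Rightarrow> nat \<Rightarrow> bool" where
  "zrel ZLe = (\<le>)" | "zrel ZGe = (\<ge>)" | "zrel ZLt = (<)" | "zrel ZGt = (>)"

definition zeta :: "zsym \<Rightarrow> nat list \<Rightarrow> nat \<Rightarrow> 'a::field" where
  "zeta s u n = (if sorted_wrt (zrel s) u then 1 else 0)"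

text \<open>zeta_{s|t} = mult o (zeta_s (x) zeta_t) o Delta, Delta deconcatenation.\<close>
definition zeta2 :: "zsym \<Rightarrow> zsym \<Rightarrow> nat list \<Rightarrow> nat \<Rightarrow> 'a::field" where
  "zeta2 s t u n = (\<Sum>i\<le>length u. zeta s (take i u) n * zeta t (drop i u) n)"

fun blocks :: "nat list \<Rightarrow> 'b list \<Rightarrow> 'b list list" where
  "blocks [] w = []"
| "blocks (g # gs) w = take g w # blocks gs (drop g w)"

text \<open>(zeta)_gamma([w,n]): iterated coproduct, projection to degrees gamma_1..gamma_k,
  zeta on each factor, multiply. For a basis element only the unique cut into
  pieces of lengths gamma_i survives the projection.\<close>
definition zeta_gamma :: "zsym \<Rightarrow> zsym \<Rightarrow> nat list \<Rightarrow> nat \<Rightarrow> nat list \<Rightarrow> 'a::field" where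
  "zeta_gamma s t w n \<gamma> =
     (if sum_list \<gamma> = length w
      then prod_list (map (\<lambda>u. zeta2 s t u n) (blocks \<gamma> w)) else 0)"

text \<open>Psi_{s|t}([w,n]) = sum over compositions gamma of (zeta_{s|t})_gamma([w,n]) M_gamma,
  given by its coefficient on M_gamma.\<close>
definition Psi :: "zsym \<Rightarrow> zsym \<Rightarrow> nat list \<Rightarrow> nat \<Rightarrow> nat list \<Rightarrow> 'a::field" where
  "Psi s t w n \<gamma> = (if (\<forall>g\<in>set \<gamma>. 0 < g) then zeta_gamma s t w n \<gamma> else 0)"

definition K :: "nat list \<Rightarrow> nat list \<Rightarrow> 'a::field" where
  "K \<alpha> \<beta> = (if is_comp \<beta> (sum_list \<alpha>) \<and> Iset \<alpha> \<subseteq> Iset \<beta> \<union> (\<lambda>i. i + 1) ` Iset \<beta>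
              then 2 ^ length \<beta> else 0)"

definition flat :: "nat list \<Rightarrow> nat list" where
  "flat \<alpha> = (if length \<alpha> \<le> 1 then \<alpha>
              else (last \<alpha> + 1) # rev (butlast (tl \<alpha>)) @ [hd \<alpha> - 1])"

end

theory Submission
  imports Defs
begin

(* Under Psi_{s|t} the coefficient of M_gamma in the image of [w,n] is a product over the blocks
   into which gamma cuts w: for each block, the number of ways to split it into an s-sorted prefix
   and a t-sorted suffix. In all four cases the relations s and t are transitive and complementary,
   and then a nonempty block has exactly two such splits (just before and just after its extremal
   letter) if it contains no turn -- a t-step followed by an s-step -- and none otherwise. A turn
   lies inside a block iff neither of the two cuts around its middle letter belongs to I(gamma),
   so the coefficient is 2^l(gamma) exactly when every turn lies in I(gamma) or I(gamma)+1.
   The turns of w for (>,<=) are its peaks and for (<,>=) its valleys; reversing w reflects the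
   turn set by i |-> l(w)+1-i, which is also the effect of alpha |-> alpha^flat on I(alpha). *)

(* Positions are 1-based and name the middle letter, as in Peak and Val. *)
definition turns :: "('b \<Rightarrow> 'b \<Rightarrow> bool) \<Rightarrow> ('b \<Rightarrow> 'b \<Rightarrow> bool) \<Rightarrow> 'b list \<Rightarrow> nat set" where
  "turns R S u = {i. 1 < i \<and> i < length u \<and> S (u ! (i-2)) (u ! (i-1)) \<and> R (u ! (i-1)) (u ! i)}"

lemma turns_short: "length u < 3 \<Longrightarrow> turns R S u = {}"
  by (auto simp: turns_def)

lemma turns_Cons_Cons_Cons:
  "turns R S (x # y # z # v) = (if S x y \<and> R y z then {2} else {}) \<union> Suc ` turns R S (y # z # v)"
proof (rule set_eqI)
  fix i
  show "i \<in> turns R S (x # y # z # v) \<longleftrightarrow>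
      i \<in> (if S x y \<and> R y z then {2} else {}) \<union> Suc ` turns R S (y # z # v)"
  proof (cases "i \<le> 2")
    case True
    then show ?thesis by (auto simp: turns_def numeral_2_eq_2 le_Suc_eq)
  next
    case False
    then obtain k where "i = Suc (2 + k)"
      using less_imp_Suc_add not_le by blast
    then show ?thesis by (auto simp: turns_def numeral_2_eq_2 image_iff)
  qed
qed

lemma turns_take: "i \<in> turns R S (take g u) \<longleftrightarrow> i \<in> turns R S u \<and> i < g"
  by (auto simp: turns_def)

lemma turns_drop: "i \<in> turns R S (drop g u) \<longleftrightarrow> 1 < i \<and> g + i \<in> turns R S u"
  by (auto simp: turns_def add.commute add.left_commute add_diff_assoc)

lemma mem_turns_rev:
  "i \<in> turns R S (rev u) \<longleftrightarrow>
     1 < i \<and> i < length u \<and> length u + 1 - i \<in> turns (\<lambda>a b. S b a) (\<lambda>a b. R b a) u"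
proof (cases "1 < i \<and> i < length u")
  case True
  then have "rev u ! (i - 2) = u ! (length u + 1 - i)" "rev u ! (i - 1) = u ! (length u + 1 - i - 1)"
    "rev u ! i = u ! (length u + 1 - i - 2)"
    by (auto simp: rev_nth)
  with True show ?thesis by (auto simp: turns_def)
qed (auto simp: turns_def)

lemma turns_rev:
  "turns R S (rev u) = (\<lambda>i. length u + 1 - i) ` turns (\<lambda>a b. S b a) (\<lambda>a b. R b a) u"
  (is "_ = ?f ` ?T")
proof (rule set_eqI)
  fix i
  have T: "1 < j \<and> j < length u" if "j \<in> ?T" for j
    using that by (simp add: turns_def)
  show "i \<in> turns R S (rev u) \<longleftrightarrow> i \<in> ?f ` ?T"
  proof
    assume "i \<in> turns R S (rev u)"
    then have "?f i \<in> ?T" "i = ?f (?f i)" by (auto simp: mem_turns_rev)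
    then show "i \<in> ?f ` ?T" by blast
  next
    assume "i \<in> ?f ` ?T"
    then obtain j where "j \<in> ?T" "i = ?f j" by blast
    moreover from T[OF \<open>j \<in> ?T\<close>] have "1 < ?f j" "?f j < length u" "?f (?f j) = j"
      by auto
    ultimately show "i \<in> turns R S (rev u)" by (simp add: mem_turns_rev)
  qed
qed

lemma Peak_eq_turns: "Peak w = turns (zrel ZGt) (zrel ZLe) w"
  by (simp add: Peak_def turns_def)

lemma Val_eq_turns: "Val w = turns (zrel ZLt) (zrel ZGe) w"
  by (simp add: Val_def turns_def)

definition split_count :: "('b \<Rightarrow> 'b \<Rightarrow> bool) \<Rightarrow> ('b \<Rightarrow> 'b \<Rightarrow> bool) \<Rightarrow> 'b list \<Rightarrow> nat" where
  "split_count R S u = (\<Sum>i\<le>length u. of_bool (sorted_wrt R (take i u) \<and> sorted_wrt S (drop i u)))"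

context
  fixes R S :: "'b \<Rightarrow> 'b \<Rightarrow> bool"
  assumes trans_R: "transp R" and trans_S: "transp S" and S_eq: "S = (\<lambda>x y. \<not> R x y)"
begin

lemma sorted_wrt_iff_no_turns:
  assumes "S x y"
  shows "sorted_wrt S (y # v) \<longleftrightarrow> turns R S (x # y # v) = {}"
  using assms
proof (induction v arbitrary: x y)
  case Nil
  then show ?case by (simp add: turns_short)
next
  case (Cons z v)
  show ?case
  proof (cases "R y z")
    case True
    with Cons.prems show ?thesis by (simp add: S_eq turns_Cons_Cons_Cons)
  next
    case False
    then have "S y z" by (simp add: S_eq)
    with Cons.IH[of y z] Cons.prems False show ?thesis
      by (simp add: sorted_wrt2[OF trans_S] turns_Cons_Cons_Cons del: sorted_wrt.simps(2))
  qed
qed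

lemma split_count_Cons:
  "split_count R S (x # v) = (if turns R S (x # v) = {} then 2 else 0)"
proof (induction v arbitrary: x)
  case Nil
  then show ?case by (simp add: split_count_def turns_short)
next
  case (Cons y v)
  define T where
    "T = (\<Sum>i\<le>length v. of_bool (sorted_wrt R (y # take i v) \<and> sorted_wrt S (drop i v)) :: nat)"
  have count_yv: "split_count R S (y # v) = of_bool (sorted_wrt S (y # v)) + T"
    unfolding split_count_def T_def length_Cons sum.atMost_Suc_shift by simp
  have count_xyv: "split_count R S (x # y # v) =
      of_bool (sorted_wrt S (x # y # v)) + of_bool (sorted_wrt S (y # v)) + (if R x y then T else 0)"
    unfolding split_count_def T_def length_Cons sum.atMost_Suc_shift
    by (simp add: sorted_wrt2[OF trans_R] sorted_wrt1 of_bool_conj del: sorted_wrt.simps(2))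
  show ?case
  proof (cases "R x y")
    case True
    then have "turns R S (x # y # v) = {} \<longleftrightarrow> turns R S (y # v) = {}"
      by (cases v) (auto simp: S_eq turns_Cons_Cons_Cons turns_short)
    with True Cons.IH[of y] count_xyv count_yv show ?thesis
      by (simp add: S_eq)
  next
    case False
    then have "S x y" by (simp add: S_eq)
    with count_xyv sorted_wrt_iff_no_turns[of x y v] False show ?thesis
      by (simp add: sorted_wrt2[OF trans_S] del: sorted_wrt.simps(2))
  qed
qed

end

lemma length_blocks: "length (blocks \<gamma> u) = length \<gamma>"
  by (induction \<gamma> arbitrary: u) auto

lemma Nil_notin_blocks:
  "\<forall>g\<in>set \<gamma>. 0 < g \<Longrightarrow> sum_list \<gamma> = length u \<Longrightarrow> [] \<notin> set (blocks \<gamma> u)"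
  by (induction \<gamma> arbitrary: u) auto

lemma Iset_eq_image: "Iset \<alpha> = (\<lambda>j. sum_list (take j \<alpha>)) ` {1..<length \<alpha>}"
  by (auto simp: Iset_def)

lemma Iset_Cons: "Iset (g # gs) = (if gs = [] then {} else insert g ((+) g ` Iset gs))"
proof (cases "gs = []")
  case False
  then have indices: "{1..<length (g # gs)} = Suc ` insert 0 {1..<length gs}"
    by (auto simp: image_iff)
  have "Iset (g # gs) = (\<lambda>k. g + sum_list (take k gs)) ` insert 0 {1..<length gs}"
    unfolding Iset_eq_image indices image_image by simp
  also have "\<dots> = insert g ((+) g ` Iset gs)"
    by (simp add: Iset_eq_image image_image)
  finally show ?thesis
    using False by simp
qed (simp add: Iset_def)

lemma no_turns_in_blocks:
  assumes "\<forall>g\<in>set \<gamma>. 0 < g" and "sum_list \<gamma> = length u"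
  shows "(\<forall>b\<in>set (blocks \<gamma> u). turns R S b = {}) \<longleftrightarrow>
           turns R S u \<subseteq> Iset \<gamma> \<union> (\<lambda>i. i + 1) ` Iset \<gamma>"
  using assms
proof (induction \<gamma> arbitrary: u)
  case Nil
  then show ?case by (simp add: turns_short)
next
  case (Cons g gs)
  show ?case
  proof (cases "gs = []")
    case True
    with Cons.prems show ?thesis by (simp add: Iset_def)
  next
    case False
    let ?cover = "\<lambda>I. I \<union> (\<lambda>i. i + 1) ` I"
    have below: "i \<notin> ?cover (Iset (g # gs))" if "i < g" for i
      using that by (auto simp: Iset_Cons)
    have above: "g + k \<in> ?cover (Iset (g # gs)) \<longleftrightarrow> k \<le> 1 \<or> k \<in> ?cover (Iset gs)" for k
      using False by (auto simp: Iset_Cons image_iff le_Suc_eq)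
    have IH: "(\<forall>b\<in>set (blocks gs (drop g u)). turns R S b = {}) \<longleftrightarrow>
        turns R S (drop g u) \<subseteq> ?cover (Iset gs)"
      using Cons by simp
    show ?thesis
    proof
      assume "\<forall>b\<in>set (blocks (g # gs) u). turns R S b = {}"
      then have "turns R S (take g u) = {}" and "turns R S (drop g u) \<subseteq> ?cover (Iset gs)"
        using IH by auto
      show "turns R S u \<subseteq> ?cover (Iset (g # gs))"
      proof
        fix i assume i: "i \<in> turns R S u"
        with \<open>turns R S (take g u) = {}\<close> have "g \<le> i"
          by (metis empty_iff not_le turns_take)
        then obtain k where k: "i = g + k" using le_Suc_ex by blast
        with i \<open>turns R S (drop g u) \<subseteq> ?cover (Iset gs)\<close> show "i \<in> ?cover (Iset (g # gs))"
          unfolding k above using turns_drop[of k R S g u] by fastforce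
      qed
    next
      assume turns_covered: "turns R S u \<subseteq> ?cover (Iset (g # gs))"
      then have "turns R S (take g u) = {}"
        using below turns_take by blast
      moreover have "turns R S (drop g u) \<subseteq> ?cover (Iset gs)"
      proof
        fix k assume "k \<in> turns R S (drop g u)"
        then have "\<not> k \<le> 1" "g + k \<in> ?cover (Iset (g # gs))"
          using turns_covered by (auto simp: turns_drop)
        then show "k \<in> ?cover (Iset gs)"
          unfolding above by simp
      qed
      ultimately show "\<forall>b\<in>set (blocks (g # gs) u). turns R S b = {}"
        using IH by simp
    qed
  qed
qed

lemma flat_Cons_snoc: "flat (a # mid @ [b]) = (b + 1) # rev mid @ [a - 1]"
  by (simp add: flat_def)

lemma Cons_snoc_cases:
  assumes "2 \<le> length xs"
  obtains a mid b where "xs = a # mid @ [b]"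
proof -
  from assms obtain a ys where "xs = a # ys" "ys \<noteq> []"
    by (auto simp: numeral_2_eq_2 Suc_le_length_iff)
  with that show thesis
    by (cases ys rule: rev_cases) auto
qed

lemma sum_list_flat:
  assumes "\<forall>a\<in>set \<alpha>. 0 < a"
  shows "sum_list (flat \<alpha>) = sum_list \<alpha>"
proof (cases "length \<alpha> \<le> 1")
  case False
  then have "2 \<le> length \<alpha>"
    by simp
  then obtain a mid b where "\<alpha> = a # mid @ [b]"
    by (rule Cons_snoc_cases)
  with assms show ?thesis
    by (simp add: flat_Cons_snoc sum_list_rev)
qed (simp add: flat_def)

lemma Iset_flat: "Iset (flat \<alpha>) = (\<lambda>s. sum_list \<alpha> + 1 - s) ` Iset \<alpha>"
proof (cases "length \<alpha> \<le> 1")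
  case True
  then show ?thesis by (simp add: flat_def Iset_eq_image)
next
  case False
  then have "2 \<le> length \<alpha>"
    by simp
  then obtain a mid b where \<alpha>: "\<alpha> = a # mid @ [b]"
    by (rule Cons_snoc_cases)
  let ?l = "length \<alpha>"
  have partial_sums: "sum_list (take j (flat \<alpha>)) = sum_list \<alpha> + 1 - sum_list (take (?l - j) \<alpha>)"
    if j: "j \<in> {1..<?l}" for j
  proof -
    obtain i where i: "j = Suc i" "i \<le> length mid"
      using j by (cases j) (auto simp: \<alpha>)
    have "take (?l - j) \<alpha> = a # take (length mid - i) mid"
      using i by (simp add: \<alpha> Suc_diff_le)
    moreover have "take j (flat \<alpha>) = (b + 1) # rev (drop (length mid - i) mid)"
      using i by (simp add: \<alpha> flat_Cons_snoc take_rev)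
    moreover have
      "sum_list mid = sum_list (take (length mid - i) mid) + sum_list (drop (length mid - i) mid)"
      by (metis append_take_drop_id sum_list_append)
    ultimately show ?thesis by (simp add: \<alpha>)
  qed
  have reflect: "(\<lambda>j. ?l - j) ` {1..<?l} = {1..<?l}"
  proof
    show "{1..<?l} \<subseteq> (\<lambda>j. ?l - j) ` {1..<?l}"
    proof
      fix j assume "j \<in> {1..<?l}"
      then show "j \<in> (\<lambda>j. ?l - j) ` {1..<?l}"
        by (intro rev_image_eqI[of "?l - j"]) auto
    qed
  qed auto
  have "Iset (flat \<alpha>) = (\<lambda>j. sum_list \<alpha> + 1 - sum_list (take (?l - j) \<alpha>)) ` {1..<?l}"
    unfolding Iset_eq_image using partial_sums
    by (intro image_cong) (simp_all add: \<alpha> flat_Cons_snoc)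
  also have "\<dots> =
      (\<lambda>s. sum_list \<alpha> + 1 - s) ` (\<lambda>j. sum_list (take j \<alpha>)) ` (\<lambda>j. ?l - j) ` {1..<?l}"
    by (simp add: image_image)
  finally show ?thesis
    unfolding reflect Iset_eq_image .
qed

lemma zeta2_eq_split_count: "(zeta2 s t u n :: 'a::field) = of_nat (split_count (zrel s) (zrel t) u)"
  unfolding zeta2_def zeta_def split_count_def of_nat_sum by (intro sum.cong) auto

lemma prod_list_map_if_zero:
  "prod_list (map (\<lambda>x. if P x then c else 0) xs) =
     (if \<forall>x\<in>set xs. P x then c ^ length xs else (0::'a::semiring_1))"
  by (induction xs) auto

lemma transp_zrel: "transp (zrel s)"
  by (cases s) (auto simp: transp_def)

lemma Psi_eq_K:
  assumes complement: "zrel t = (\<lambda>x y. \<not> zrel s x y)"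
    and turns_eq: "turns (zrel s) (zrel t) u = Iset \<alpha>" and sum_eq: "sum_list \<alpha> = length u"
  shows "(Psi s t u n :: nat list \<Rightarrow> 'a::field) = K \<alpha>"
proof
  fix \<gamma>
  show "(Psi s t u n \<gamma> :: 'a) = K \<alpha> \<gamma>"
  proof (cases "is_comp \<gamma> (length u)")
    case False
    then show ?thesis by (auto simp: Psi_def zeta_gamma_def K_def sum_eq is_comp_def)
  next
    case True
    then have pos: "\<forall>g\<in>set \<gamma>. 0 < g" and sum: "sum_list \<gamma> = length u"
      by (auto simp: is_comp_def)
    have "zeta2 s t b n = (if turns (zrel s) (zrel t) b = {} then 2 else (0::'a))"
      if "b \<in> set (blocks \<gamma> u)" for b
    proof -
      from that Nil_notin_blocks[OF pos sum] have "b \<noteq> []"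
        by blast
      then obtain x v where "b = x # v"
        by (auto simp: neq_Nil_conv)
      then show ?thesis
        using split_count_Cons[OF transp_zrel transp_zrel complement]
        by (simp add: zeta2_eq_split_count)
    qed
    then have "(Psi s t u n \<gamma> :: 'a) =
        prod_list (map (\<lambda>b. if turns (zrel s) (zrel t) b = {} then 2 else 0) (blocks \<gamma> u))"
      unfolding Psi_def zeta_gamma_def using pos sum by (simp cong: map_cong)
    also have "\<dots> = (if turns (zrel s) (zrel t) u \<subseteq> Iset \<gamma> \<union> (\<lambda>i. i + 1) ` Iset \<gamma>
                       then 2 ^ length \<gamma> else 0)"
      by (simp add: prod_list_map_if_zero no_turns_in_blocks[OF pos sum] length_blocks)
    finally show ?thesis
      using True by (simp add: K_def sum_eq turns_eq)
  qed
qed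

theorem proposition5p7:
  fixes w :: "nat list" and n :: nat and \<alpha> \<beta> :: "nat list"
  assumes char: "(2::'a::field) \<noteq> 0"
    and W: "in_W w n"
    and a: "is_comp \<alpha> (length w)" and b: "is_comp \<beta> (length w)"
    and pk: "Peak w = Iset \<alpha>" and vl: "Val w = Iset \<beta>"
  shows "(Psi ZGt ZLe w n :: nat list \<Rightarrow> 'a) = K \<alpha>
       \<and> (Psi ZLt ZGe w n :: nat list \<Rightarrow> 'a) = K \<beta>
       \<and> (Psi ZGe ZLt (rev w) n :: nat list \<Rightarrow> 'a) = K (flat \<alpha>)
       \<and> (Psi ZLe ZGt (rev w) n :: nat list \<Rightarrow> 'a) = K (flat \<beta>)"
proof -
  from a b have sums: "sum_list \<alpha> = length w" "sum_list \<beta> = length w"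
    and pos: "\<forall>x\<in>set \<alpha>. 0 < x" "\<forall>x\<in>set \<beta>. 0 < x"
    by (auto simp: is_comp_def)
  let ?reflect = "\<lambda>i. length w + 1 - i"
  have "turns (zrel ZGe) (zrel ZLt) (rev w) = ?reflect ` Peak w"
    "turns (zrel ZLe) (zrel ZGt) (rev w) = ?reflect ` Val w"
    by (simp_all add: turns_rev Peak_eq_turns Val_eq_turns)
  with pk vl have turns_rev_w: "turns (zrel ZGe) (zrel ZLt) (rev w) = Iset (flat \<alpha>)"
    "turns (zrel ZLe) (zrel ZGt) (rev w) = Iset (flat \<beta>)"
    by (simp_all add: Iset_flat sums)
  have turns_w: "turns (zrel ZGt) (zrel ZLe) w = Iset \<alpha>" "turns (zrel ZLt) (zrel ZGe) w = Iset \<beta>"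
    using pk vl by (simp_all add: Peak_eq_turns Val_eq_turns)
  show ?thesis
    by (intro conjI Psi_eq_K turns_w turns_rev_w)
      (simp_all add: sums sum_list_flat pos fun_eq_iff not_less not_le)
qed

end
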